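(* If $X$ is a T$_D$ space in which every instance of the McKinsey scheme $\mathrm{M}:\ \Box\Diamond\varphi\to\Diamond\Box\varphi$ is $d$-valid, then $X$ is crowded and openly irresolvable.
   Context: $d$-semantics: a model on a space $X$ is a valuation of propositional variables by subsets of $X$; truth sets interpret Boolean connectives as set operations, $\Diamond\varphi$ as the derived set $\mathrm{d}_X$ (set of limit points: $x$ such that every $O-\{x\}$, $O$ an open neighbourhood of $x$, meets the set) of the truth set of $\varphi$, and $\Box=\neg\Diamond\neg$. A formula is $d$-valid in $X$ if true at every point in every model on $X$. $X$ is T$_D$ if $\mathrm{d}_X\{x\}$ is closed for all $x$; crowded if it has no isolated points. A space is irresolvable if it has no two disjoint non-empty dense subsets; $X$ is openly irresolvable if every non-empty open subspace is irresolvable. *)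

theory Defs
  imports "HOL-Analysis.Analysis"
begin

datatype fm = Var nat | Bot | Neg fm | Conj fm fm | Disj fm fm | Impl fm fm | Dia fm

definition Box :: "fm \<Rightarrow> fm" where
  "Box \<phi> = Neg (Dia (Neg \<phi>))"

fun tset :: "'a topology \<Rightarrow> (nat \<Rightarrow> 'a set) \<Rightarrow> fm \<Rightarrow> 'a set" where
  "tset X V (Var p) = V p \<inter> topspace X"
| "tset X V Bot = {}"
| "tset X V (Neg \<phi>) = topspace X - tset X V \<phi>"
| "tset X V (Conj \<phi> \<psi>) = tset X V \<phi> \<inter> tset X V \<psi>"
| "tset X V (Disj \<phi> \<psi>) = tset X V \<phi> \<union> tset X V \<psi>"
| "tset X V (Impl \<phi> \<psi>) = (topspace X - tset X V \<phi>) \<union> tset X V \<psi>"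
| "tset X V (Dia \<phi>) = X derived_set_of (tset X V \<phi>)"

definition d_valid :: "'a topology \<Rightarrow> fm \<Rightarrow> bool" where
  "d_valid X \<phi> \<longleftrightarrow> (\<forall>V. (\<forall>p. V p \<subseteq> topspace X) \<longrightarrow> tset X V \<phi> = topspace X)"

definition McKinsey :: "fm \<Rightarrow> fm" where
  "McKinsey \<phi> = Impl (Box (Dia \<phi>)) (Dia (Box \<phi>))"

definition T_D :: "'a topology \<Rightarrow> bool" where
  "T_D X \<longleftrightarrow> (\<forall>x\<in>topspace X. closedin X (X derived_set_of {x}))"

definition crowded :: "'a topology \<Rightarrow> bool" where
  "crowded X \<longleftrightarrow> \<not> (\<exists>x\<in>topspace X. openin X {x})"

definition irresolvable :: "'a topology \<Rightarrow> bool" where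
  "irresolvable X \<longleftrightarrow> \<not> (\<exists>A B. A \<subseteq> topspace X \<and> B \<subseteq> topspace X \<and> A \<noteq> {} \<and> B \<noteq> {}
      \<and> A \<inter> B = {} \<and> X closure_of A = topspace X \<and> X closure_of B = topspace X)"

definition openly_irresolvable :: "'a topology \<Rightarrow> bool" where
  "openly_irresolvable X \<longleftrightarrow>
     (\<forall>U. openin X U \<and> U \<noteq> {} \<longrightarrow> irresolvable (subtopology X U))"

end

theory Submission
  imports Defs
begin

text \<open>At an isolated point every \<open>\<box>\<close>-formula holds and every \<open>\<diamond>\<close>-formula fails, so
  the McKinsey axiom fails there; hence \<open>X\<close> is crowded. In a crowded T\<open>\<^sub>D\<close> space every
  point of an open set \<open>U\<close> is a limit point of each set dense in \<open>U\<close>. So if \<open>A\<close> and \<open>B\<close>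
  were disjoint and dense in a non-empty open \<open>U\<close>, then \<open>U\<close> would lie in the derived sets
  of both \<open>A\<close> and its complement: \<open>\<box>\<diamond>A\<close> would hold on \<open>U\<close> while \<open>\<diamond>\<box>A\<close> fails on \<open>U\<close>.\<close>

text \<open>With \<open>\<box>S = topspace X - X derived_set_of (topspace X - S)\<close>, this says
  \<open>\<box>\<diamond>A \<subseteq> \<diamond>\<box>A\<close>.\<close>

lemma d_valid_McKinsey_derived_set_of:
  assumes "d_valid X (McKinsey (Var p))" and "A \<subseteq> topspace X" and "x \<in> topspace X"
    and "x \<notin> X derived_set_of (topspace X - X derived_set_of A)"
  shows "x \<in> X derived_set_of (topspace X - X derived_set_of (topspace X - A))"
proof -
  have "tset X (\<lambda>_. A) (McKinsey (Var p)) = topspace X"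
    using assms(1,2) unfolding d_valid_def by simp
  then have "x \<in> tset X (\<lambda>_. A) (McKinsey (Var p))"
    using assms(3) by blast
  moreover have "A \<inter> topspace X = A"
    using assms(2) by blast
  ultimately show ?thesis
    using assms(3,4) by (simp add: McKinsey_def Box_def)
qed

lemma isolated_not_in_derived_set_of:
  "openin X {x} \<Longrightarrow> x \<notin> X derived_set_of S"
  by (auto simp: in_derived_set_of)

lemma openin_Int_derived_set_of_complement:
  assumes "openin X U" and "U \<subseteq> S"
  shows "U \<inter> X derived_set_of (topspace X - S) = {}"
proof -
  have "U \<inter> (topspace X - S) = {}"
    using assms(2) by blast
  then have "U \<inter> X closure_of (topspace X - S) = {}"
    by (simp add: openin_Int_closure_of_eq_empty[OF assms(1)])
  then show ?thesis
    using derived_set_of_subset_closure_of[of X "topspace X - S"] by blast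
qed

lemma d_valid_McKinsey_imp_crowded:
  assumes "d_valid X (McKinsey (Var p))"
  shows "crowded X"
  unfolding crowded_def
proof
  assume "\<exists>x\<in>topspace X. openin X {x}"
  then obtain x where "x \<in> topspace X" and isolated: "openin X {x}"
    by blast
  have "x \<notin> X derived_set_of (topspace X - X derived_set_of {})"
    using isolated by (rule isolated_not_in_derived_set_of)
  then have "x \<in> X derived_set_of (topspace X - X derived_set_of (topspace X - {}))"
    by (rule d_valid_McKinsey_derived_set_of[OF assms empty_subsetI \<open>x \<in> topspace X\<close>])
  then show False
    by (simp add: isolated_not_in_derived_set_of[OF isolated])
qed

lemma d_valid_McKinsey_open_subset_derived_sets_empty:
  assumes "d_valid X (McKinsey (Var p))" and "openin X U" and "A \<subseteq> topspace X"
    and "U \<subseteq> X derived_set_of A" and "U \<subseteq> X derived_set_of (topspace X - A)"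
  shows "U = {}"
proof (rule ccontr)
  assume "U \<noteq> {}"
  then obtain x where "x \<in> U"
    by blast
  then have x: "x \<in> topspace X"
    using assms(2) openin_subset by blast
  have "U \<inter> X derived_set_of (topspace X - X derived_set_of A) = {}"
    using assms(2,4) by (rule openin_Int_derived_set_of_complement)
  with \<open>x \<in> U\<close> have "x \<in> X derived_set_of (topspace X - X derived_set_of (topspace X - A))"
    by (intro d_valid_McKinsey_derived_set_of[OF assms(1,3) x]) blast
  moreover have "U \<inter> X derived_set_of (topspace X - X derived_set_of (topspace X - A)) = {}"
    using assms(2,5) by (rule openin_Int_derived_set_of_complement)
  ultimately show False
    using \<open>x \<in> U\<close> by blast
qed

lemma T_D_crowded_open_Diff_closure_of_singleton:
  assumes "T_D X" and "crowded X" and "openin X W" and "x \<in> W"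
  shows "W - X closure_of {x} \<noteq> {}"
proof
  assume "W - X closure_of {x} = {}"
  have x: "x \<in> topspace X"
    using assms(3,4) openin_subset by blast
  then have "X closure_of {x} = insert x (X derived_set_of {x})"
    by (auto simp: closure_of_alt)
  moreover have "x \<notin> X derived_set_of {x}"
    by (auto simp: in_derived_set_of)
  ultimately have "W - X derived_set_of {x} = {x}"
    using \<open>W - X closure_of {x} = {}\<close> assms(4) by blast
  moreover have "openin X (W - X derived_set_of {x})"
    using assms(1,3) x unfolding T_D_def by blast
  ultimately show False
    using assms(2) x unfolding crowded_def by auto
qed

lemma T_D_crowded_open_subset_closure_of_imp_derived_set_of:
  assumes "T_D X" and "crowded X" and "openin X U" and "U \<subseteq> X closure_of A"
  shows "U \<subseteq> X derived_set_of A"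
proof
  fix x assume "x \<in> U"
  then have x: "x \<in> topspace X"
    using assms(3) openin_subset by blast
  show "x \<in> X derived_set_of A"
    unfolding in_derived_set_of
  proof (intro conjI x allI impI)
    fix W assume W: "x \<in> W \<and> openin X W"
    define G where "G = W \<inter> U - X closure_of {x}"
    have "openin X G"
      unfolding G_def using W assms(3) by (intro openin_diff openin_Int) auto
    moreover have "G \<noteq> {}"
      unfolding G_def using W assms(1-3) \<open>x \<in> U\<close>
      by (intro T_D_crowded_open_Diff_closure_of_singleton) auto
    moreover have "G \<subseteq> X closure_of A"
      unfolding G_def using assms(4) by blast
    ultimately obtain y where "y \<in> G" "y \<in> A"
      using openin_Int_closure_of_eq_empty[of X G A] by blast
    moreover have "x \<notin> G"
      unfolding G_def using x closure_of_subset[of "{x}" X] by blast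
    ultimately show "\<exists>y. y \<noteq> x \<and> y \<in> A \<and> y \<in> W"
      unfolding G_def by auto
  qed
qed

lemma T_D_d_valid_McKinsey_imp_openly_irresolvable:
  assumes "T_D X" and "d_valid X (McKinsey (Var p))"
  shows "openly_irresolvable X"
  unfolding openly_irresolvable_def irresolvable_def
proof (intro allI impI notI)
  fix U assume U: "openin X U \<and> U \<noteq> {}"
  then have topspace_U: "topspace (subtopology X U) = U"
    by (simp add: openin_subset inf_absorb2)
  assume "\<exists>A B. A \<subseteq> topspace (subtopology X U) \<and> B \<subseteq> topspace (subtopology X U)
      \<and> A \<noteq> {} \<and> B \<noteq> {} \<and> A \<inter> B = {}
      \<and> subtopology X U closure_of A = topspace (subtopology X U)
      \<and> subtopology X U closure_of B = topspace (subtopology X U)"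
  then obtain A B where "A \<subseteq> U" "B \<subseteq> U" "A \<inter> B = {}"
    and "U \<subseteq> X closure_of A" "U \<subseteq> X closure_of B"
    unfolding topspace_U using U
    by (auto simp: closure_of_subtopology_open simp flip: inf.absorb_iff1)
  have "crowded X"
    using assms(2) by (rule d_valid_McKinsey_imp_crowded)
  note derived = T_D_crowded_open_subset_closure_of_imp_derived_set_of[OF assms(1) this]
  have "U \<subseteq> X derived_set_of A" "U \<subseteq> X derived_set_of B"
    using U \<open>U \<subseteq> X closure_of A\<close> \<open>U \<subseteq> X closure_of B\<close> derived by blast+
  moreover have "X derived_set_of B \<subseteq> X derived_set_of (topspace X - A)"
    using \<open>B \<subseteq> U\<close> \<open>A \<inter> B = {}\<close> U openin_subset by (intro derived_set_of_mono) blast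
  moreover have "A \<subseteq> topspace X"
    using \<open>A \<subseteq> U\<close> U openin_subset by blast
  ultimately have "U = {}"
    using U by (intro d_valid_McKinsey_open_subset_derived_sets_empty[OF assms(2)]) auto
  with U show False
    by blast
qed

theorem theorem10:
  fixes X :: "'a topology"
  assumes "T_D X"
    and "\<forall>\<phi>. d_valid X (McKinsey \<phi>)"
  shows "crowded X \<and> openly_irresolvable X"
proof -
  have valid: "d_valid X (McKinsey (Var 0))"
    using assms(2) by blast
  show ?thesis
    using d_valid_McKinsey_imp_crowded[OF valid]
      T_D_d_valid_McKinsey_imp_openly_irresolvable[OF assms(1) valid] by blast
qed

end
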